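(* Let $\Lambda$ be a left cancellative small category and $v\in\Lambda^0$. For $C\in v\Lambda^*$ let $\mathcal U^0_C=\{E\setminus\bigcup\mathcal F: E\in C,\ \mathcal F\subseteq\mathcal D^{(0)}_v\text{ finite and }\mathcal F\text{ does not cover }C\}$. Then $\mathcal U^0_C$ is an ultrafilter base in the ring $\mathcal A_v$; let $\mathcal U_C$ be the ultrafilter it generates. The map $C\mapsto\mathcal U_C$ is a bijection from $v\Lambda^*$ onto the set of ultrafilters in $\mathcal A_v$, with inverse $\mathcal U\mapsto\mathcal U\cap\mathcal D^{(0)}_v$.
   Context: A left cancellative small category (LCSC) is a small category $\Lambda$ such that $\alpha\beta=\alpha\gamma$ implies $\beta=\gamma$. Morphisms are composed as $\alpha\beta$ when $s(\alpha)=r(\beta)$; $\Lambda^0$ is the set of objects, identified with identity morphisms; $v\Lambda=\{\alpha:r(\alpha)=v\}$; $\alpha\Lambda=\{\alpha\beta:r(\beta)=s(\alpha)\}$. For $\alpha\in\Lambda$, $\tau^\alpha(\beta)=\alpha\beta$ on $s(\alpha)\Lambda$ and $\sigma^\alpha:\alpha\Lambda\to s(\alpha)\Lambda$ is its inverse. A zigzag is a tuple $\zeta=(\alpha_1,\beta_1,\dots,\alpha_n,\beta_n)$ with $r(\alpha_i)=r(\beta_i)$ and $s(\alpha_{i+1})=s(\beta_i)$; $s(\zeta)=s(\beta_n)$, $\mathcal Zv=\{\zeta:s(\zeta)=v\}$. The zigzag map $\varphi_\zeta=\sigma^{\alpha_1}\circ\tau^{\beta_1}\circ\cdots\circ\sigma^{\alpha_n}\circ\tau^{\beta_n}$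 (composition of partial maps) has domain $A(\zeta)\subseteq s(\zeta)\Lambda$. $\mathcal D^{(0)}_v$ is the set of nonempty $A(\zeta)$, $\zeta\in\mathcal Zv$ (closed under nonempty intersections), and $\mathcal A_v$ is the ring of subsets of $v\Lambda$ generated by $\mathcal D^{(0)}_v$. In a ring of sets $\mathcal A$, a filter is a nonempty collection of nonempty members closed under intersections and supersets (in $\mathcal A$), an ultrafilter is a maximal filter, and an ultrafilter base is a nonempty family of nonempty members such that the intersection of any two contains a third and the filter it generates (by closing under supersets) is an ultrafilter. A filter in $\mathcal D^{(0)}_v$ is a nonempty $C\subseteq\mathcal D^{(0)}_v$ closed under intersection and under supersets within $\mathcal D^{(0)}_v$. A finite $\mathcal F\subseteq\mathcal D^{(0)}_v$ covers the filter $C$ if some $E\in C$ satisfies $E\subseteq\bigcup\mathcal F$. $v\Lambda^*$ is the set of filters $C$ in $\mathcal D^{(0)}_v$ such that every finite $\mathcal F\subseteq\mathcal D^{(0)}_v$ with $\mathcal F\cap C=\varnothing$ does not cover $C$. *)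

theory Defs
  imports "HOL-Analysis.Analysis"
begin

text \<open>A small category: morphisms form a set Mor; objects are identified with
identity morphisms; rng/src give range and source (as identity morphisms);
cmp a b is the composite a b, meaningful when src a = rng b.\<close>

record 'a smallcat =
  Mor :: "'a set"
  rng :: "'a \<Rightarrow> 'a"
  src :: "'a \<Rightarrow> 'a"
  cmp :: "'a \<Rightarrow> 'a \<Rightarrow> 'a"

definition small_category :: "'a smallcat \<Rightarrow> bool" where
  "small_category L \<longleftrightarrow>
     (\<forall>a\<in>Mor L. rng L a \<in> Mor L \<and> src L a \<in> Mor L
        \<and> rng L (rng L a) = rng L a \<and> src L (rng L a) = rng L a
        \<and> rng L (src L a) = src L a \<and> src L (src L a) = src L a
        \<and> cmp L (rng L a) a = a \<and> cmp L a (src L a) = a)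
   \<and> (\<forall>a\<in>Mor L. \<forall>b\<in>Mor L. src L a = rng L b \<longrightarrow>
        cmp L a b \<in> Mor L \<and> rng L (cmp L a b) = rng L a \<and> src L (cmp L a b) = src L b)
   \<and> (\<forall>a\<in>Mor L. \<forall>b\<in>Mor L. \<forall>c\<in>Mor L. src L a = rng L b \<longrightarrow> src L b = rng L c \<longrightarrow>
        cmp L (cmp L a b) c = cmp L a (cmp L b c))"

definition LCSC :: "'a smallcat \<Rightarrow> bool" where
  "LCSC L \<longleftrightarrow> small_category L \<and>
     (\<forall>a\<in>Mor L. \<forall>b\<in>Mor L. \<forall>c\<in>Mor L. src L a = rng L b \<longrightarrow> src L a = rng L c \<longrightarrow>
        cmp L a b = cmp L a c \<longrightarrow> b = c)"

definition objects :: "'a smallcat \<Rightarrow> 'a set" where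
  "objects L = {a \<in> Mor L. rng L a = a}"

definition vLam :: "'a smallcat \<Rightarrow> 'a \<Rightarrow> 'a set" where
  "vLam L v = {a \<in> Mor L. rng L a = v}"

definition tau :: "'a smallcat \<Rightarrow> 'a \<Rightarrow> 'a \<Rightarrow> 'a option" where
  "tau L b g = (if g \<in> Mor L \<and> rng L g = src L b then Some (cmp L b g) else None)"

text \<open>\<sigma>^\<alpha> as a partial map (defined on \<alpha>\<Lambda>), inverse of \<tau>^\<alpha>.\<close>
definition sigma :: "'a smallcat \<Rightarrow> 'a \<Rightarrow> 'a \<Rightarrow> 'a option" where
  "sigma L a d = (if \<exists>e\<in>Mor L. rng L e = src L a \<and> cmp L a e = d
                  then Some (THE e. e \<in> Mor L \<and> rng L e = src L a \<and> cmp L a e = d)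
                  else None)"

text \<open>A zigzag (\<alpha>_1,\<beta>_1,...,\<alpha>_n,\<beta>_n) is represented as the nonempty list
[(\<alpha>_1,\<beta>_1),...,(\<alpha>_n,\<beta>_n)].\<close>
definition zigzag :: "'a smallcat \<Rightarrow> ('a \<times> 'a) list \<Rightarrow> bool" where
  "zigzag L z \<longleftrightarrow> z \<noteq> [] \<and>
     (\<forall>i<length z. fst (z!i) \<in> Mor L \<and> snd (z!i) \<in> Mor L
        \<and> rng L (fst (z!i)) = rng L (snd (z!i)))
   \<and> (\<forall>i. Suc i < length z \<longrightarrow> src L (fst (z!Suc i)) = src L (snd (z!i)))"

definition zsrc :: "'a smallcat \<Rightarrow> ('a \<times> 'a) list \<Rightarrow> 'a" where
  "zsrc L z = src L (snd (last z))"

text \<open>The zigzag map \<phi>_\<zeta> = \<sigma>^{\<alpha>_1} \<circ> \<tau>^{\<beta>_1} \<circ> ... \<circ> \<sigma>^{\<alpha>_n} \<circ> \<tau>^{\<beta>_n}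
(the pair (\<alpha>_n,\<beta>_n) is applied first).\<close>
fun zzmap :: "'a smallcat \<Rightarrow> ('a \<times> 'a) list \<Rightarrow> 'a \<Rightarrow> 'a option" where
  "zzmap L [] g = Some g"
| "zzmap L ((a,b) # z) g = Option.bind (zzmap L z g) (\<lambda>d. Option.bind (tau L b d) (sigma L a))"

definition zzdom :: "'a smallcat \<Rightarrow> ('a \<times> 'a) list \<Rightarrow> 'a set" where
  "zzdom L z = {g \<in> Mor L. zzmap L z g \<noteq> None}"

definition D0 :: "'a smallcat \<Rightarrow> 'a \<Rightarrow> 'a set set" where
  "D0 L v = {zzdom L z | z. zigzag L z \<and> zsrc L z = v \<and> zzdom L z \<noteq> {}}"

definition Av :: "'a smallcat \<Rightarrow> 'a \<Rightarrow> 'a set set" where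
  "Av L v = \<Inter>{R. ring_of_sets (vLam L v) R \<and> D0 L v \<subseteq> R}"

definition is_filter_in :: "'b set set \<Rightarrow> 'b set set \<Rightarrow> bool" where
  "is_filter_in A F \<longleftrightarrow> F \<noteq> {} \<and> F \<subseteq> A \<and> {} \<notin> F
     \<and> (\<forall>E\<in>F. \<forall>E'\<in>F. E \<inter> E' \<in> F)
     \<and> (\<forall>E\<in>F. \<forall>E'\<in>A. E \<subseteq> E' \<longrightarrow> E' \<in> F)"

definition is_ultrafilter_in :: "'b set set \<Rightarrow> 'b set set \<Rightarrow> bool" where
  "is_ultrafilter_in A U \<longleftrightarrow> is_filter_in A U \<and>
     (\<forall>F. is_filter_in A F \<and> U \<subseteq> F \<longrightarrow> F = U)"

definition upclose :: "'b set set \<Rightarrow> 'b set set \<Rightarrow> 'b set set" where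
  "upclose A B = {E \<in> A. \<exists>X\<in>B. X \<subseteq> E}"

definition is_ultrafilter_base :: "'b set set \<Rightarrow> 'b set set \<Rightarrow> bool" where
  "is_ultrafilter_base A B \<longleftrightarrow> B \<noteq> {} \<and> B \<subseteq> A \<and> {} \<notin> B
     \<and> (\<forall>X\<in>B. \<forall>Y\<in>B. \<exists>Z\<in>B. Z \<subseteq> X \<inter> Y)
     \<and> is_ultrafilter_in A (upclose A B)"

definition covers :: "'b set set \<Rightarrow> 'b set set \<Rightarrow> bool" where
  "covers F C \<longleftrightarrow> (\<exists>E\<in>C. E \<subseteq> \<Union>F)"

definition vLamStar :: "'a smallcat \<Rightarrow> 'a \<Rightarrow> 'a set set set" where
  "vLamStar L v = {C. is_filter_in (D0 L v) C \<and>
     (\<forall>F. finite F \<and> F \<subseteq> D0 L v \<and> F \<inter> C = {} \<longrightarrow> \<not> covers F C)}"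

definition U0 :: "'a smallcat \<Rightarrow> 'a \<Rightarrow> 'a set set \<Rightarrow> 'a set set" where
  "U0 L v C = {E - \<Union>F | E F. E \<in> C \<and> finite F \<and> F \<subseteq> D0 L v \<and> \<not> covers F C}"

end

theory Submission
  imports Defs
begin

text \<open>Let \<open>\<A>\<close> be the ring generated by a family \<open>D\<close> of sets closed under nonempty intersections.
  For a tight filter \<open>C\<close> the sets \<open>E - \<Union>F\<close> (\<open>E \<in> C\<close>, \<open>F\<close> finite and disjoint from \<open>C\<close>)
  form a directed family of nonempty sets. It decides every generator \<open>G\<close>: either \<open>G \<in> C\<close>, or
  \<open>E - G\<close> lies in the family and misses \<open>G\<close>. The sets it decides form a ring, so it decides all
  of \<open>\<A>\<close> and generates an ultrafilter whose trace on \<open>D\<close> is \<open>C\<close>. Conversely, an ultrafilter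
  \<open>U\<close> of \<open>\<A>\<close> is prime and every member of \<open>\<A>\<close> is covered by finitely many generators, so
  \<open>U \<inter> D\<close> is a tight filter whose base lies in \<open>U\<close>; maximality of the ultrafilter it generates
  gives equality. For a left cancellative category, \<open>\<D>\<^sup>(\<^sup>0\<^sup>)\<^sub>v\<close> is closed under nonempty
  intersections because zigzags can be reversed and concatenated.\<close>

lemma ring_of_sets_hull:
  assumes "D \<subseteq> Pow X"
  shows "ring_of_sets X (ring_of_sets X hull D)"
proof -
  let ?K = "{R. ring_of_sets X R \<and> D \<subseteq> R}"
  have "Pow X \<in> ?K"
    using assms by (simp add: ring_of_sets_Pow)
  have closed: "{} \<in> R" "a \<in> R \<Longrightarrow> b \<in> R \<Longrightarrow> a \<union> b \<in> R" "a \<in> R \<Longrightarrow> b \<in> R \<Longrightarrow> a - b \<in> R"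
    if "R \<in> ?K" for R a b
    using that by (simp_all add: ring_of_sets_iff)
  have "ring_of_sets X (\<Inter>?K)"
  proof (rule ring_of_sets_iff[THEN iffD2], intro conjI ballI)
    show "\<Inter>?K \<subseteq> Pow X"
      using \<open>Pow X \<in> ?K\<close> by (rule Inter_lower)
    show "{} \<in> \<Inter>?K"
      by (rule InterI) (rule closed(1))
    fix a b assume "a \<in> \<Inter>?K" "b \<in> \<Inter>?K"
    then show "a \<union> b \<in> \<Inter>?K" "a - b \<in> \<Inter>?K"
      using closed(2,3) by (meson InterD InterI)+
  qed
  then show ?thesis
    unfolding hull_def .
qed

lemma ring_of_sets_hull_induct:
  assumes "Q \<in> ring_of_sets X hull D" and "D \<subseteq> Pow X"
    and "P {}" and "\<And>a b. P a \<Longrightarrow> P b \<Longrightarrow> P (a \<union> b)" and "\<And>a b. P a \<Longrightarrow> P b \<Longrightarrow> P (a - b)"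
    and "\<And>G. G \<in> D \<Longrightarrow> P G"
  shows "P Q"
proof -
  have "ring_of_sets X hull D \<subseteq> {Q \<in> Pow X. P Q}"
    by (rule hull_minimal) (use assms(2-) in \<open>auto simp: ring_of_sets_iff\<close>)
  with assms(1) show ?thesis by blast
qed

lemma is_filter_inD:
  assumes "is_filter_in A F"
  shows "\<exists>E. E \<in> F" and "F \<subseteq> A" and "{} \<notin> F"
    and "\<And>E E'. E \<in> F \<Longrightarrow> E' \<in> F \<Longrightarrow> E \<inter> E' \<in> F"
    and "\<And>E E'. E \<in> F \<Longrightarrow> E' \<in> A \<Longrightarrow> E \<subseteq> E' \<Longrightarrow> E' \<in> F"
  using assms unfolding is_filter_in_def by (simp_all add: ex_in_conv)

lemma is_ultrafilter_inI:
  assumes filter: "is_filter_in A U" and "\<And>Q. Q \<in> A \<Longrightarrow> Q \<notin> U \<Longrightarrow> \<exists>P\<in>U. Q \<inter> P = {}"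
  shows "is_ultrafilter_in A U"
  unfolding is_ultrafilter_in_def
proof (intro conjI allI impI filter)
  fix F assume F: "is_filter_in A F \<and> U \<subseteq> F"
  have "Q \<in> U" if "Q \<in> F" for Q
  proof (rule ccontr)
    assume "Q \<notin> U"
    moreover have "Q \<in> A" using is_filter_inD(2) F \<open>Q \<in> F\<close> by blast
    ultimately obtain P where "P \<in> F" "Q \<inter> P = {}"
      using assms(2) F by blast
    then show False
      using is_filter_inD(3,4) F \<open>Q \<in> F\<close> by metis
  qed
  with F show "F = U" by blast
qed

lemma is_ultrafilter_in_filter: "is_ultrafilter_in A U \<Longrightarrow> is_filter_in A U"
  unfolding is_ultrafilter_in_def by blast

lemma is_ultrafilter_in_maximal:
  assumes "is_ultrafilter_in A U" "is_filter_in A F" "U \<subseteq> F"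
  shows "F = U"
  using assms unfolding is_ultrafilter_in_def by blast

lemma ultrafilter_in_disjoint:
  assumes A: "ring_of_sets X A" and U: "is_ultrafilter_in A U" and Q: "Q \<in> A" "Q \<notin> U"
  shows "\<exists>P\<in>U. Q \<inter> P = {}"
proof (rule ccontr)
  assume meets: "\<not> ?thesis"
  have Int: "a \<inter> b \<in> A" if "a \<in> A" "b \<in> A" for a b
    using A that by (metis ring_of_sets.axioms(1) semiring_of_sets.Int)
  have filter: "is_filter_in A U"
    using U by (rule is_ultrafilter_in_filter)
  note U_props = is_filter_inD[OF filter]
  define F where "F = {S \<in> A. \<exists>P\<in>U. Q \<inter> P \<subseteq> S}"
  have "is_filter_in A F"
    unfolding is_filter_in_def
  proof (intro conjI ballI impI)
    obtain P where "P \<in> U" using U_props(1) by blast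
    then have "Q \<inter> P \<in> F"
      using Q(1) Int U_props(2) unfolding F_def by blast
    then show "F \<noteq> {}" by blast
    show "{} \<notin> F" using meets unfolding F_def by blast
    fix E E' assume "E \<in> F" "E' \<in> F"
    then obtain P P' where "P \<in> U" "P' \<in> U" "Q \<inter> P \<subseteq> E" "Q \<inter> P' \<subseteq> E'" "E \<in> A" "E' \<in> A"
      unfolding F_def by blast
    moreover have "P \<inter> P' \<in> U" using U_props(4) \<open>P \<in> U\<close> \<open>P' \<in> U\<close> .
    ultimately show "E \<inter> E' \<in> F" unfolding F_def using Int by blast
  qed (auto simp: F_def)
  moreover have "U \<subseteq> F"
    using U_props(2) unfolding F_def by blast
  ultimately have "F = U" by (rule is_ultrafilter_in_maximal[OF U])
  moreover have "Q \<in> F"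
    using Q(1) U_props(1) unfolding F_def by blast
  ultimately show False using Q(2) by blast
qed

lemma ultrafilter_in_prime:
  assumes A: "ring_of_sets X A" and U: "is_ultrafilter_in A U"
    and "finite F" "F \<subseteq> A" "E \<in> U" "E \<subseteq> \<Union>F"
  shows "F \<inter> U \<noteq> {}"
  using assms(3-)
proof (induction F arbitrary: E rule: finite_induct)
  case empty
  then have "E = {}" by simp
  with \<open>E \<in> U\<close> show ?case
    using is_filter_inD(3)[OF is_ultrafilter_in_filter[OF U]] by blast
next
  case (insert G F)
  show ?case
  proof (cases "G \<in> U")
    case False
    then obtain P where "P \<in> U" "G \<inter> P = {}"
      using ultrafilter_in_disjoint[OF A U] insert.prems(1) by blast
    have "E \<inter> P \<in> U"
      using is_ultrafilter_in_filter[OF U] \<open>E \<in> U\<close> \<open>P \<in> U\<close> by (rule is_filter_inD(4))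
    moreover have "E \<inter> P \<subseteq> \<Union>F"
      using \<open>E \<subseteq> \<Union>(insert G F)\<close> \<open>G \<inter> P = {}\<close> by blast
    ultimately have "F \<inter> U \<noteq> {}"
      using insert.IH insert.prems(1) by blast
    then show ?thesis by blast
  qed simp
qed

definition decides :: "'b set set \<Rightarrow> 'b set \<Rightarrow> bool" where
  "decides B Q \<longleftrightarrow> (\<exists>b\<in>B. b \<subseteq> Q) \<or> (\<exists>b\<in>B. b \<inter> Q = {})"

lemma decides_Un:
  assumes directed: "\<And>x y. x \<in> B \<Longrightarrow> y \<in> B \<Longrightarrow> \<exists>z\<in>B. z \<subseteq> x \<inter> y"
    and "decides B a" and "decides B b"
  shows "decides B (a \<union> b)"
proof (cases "\<exists>x\<in>B. x \<subseteq> a \<or> x \<subseteq> b")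
  case True
  then show ?thesis unfolding decides_def by blast
next
  case False
  with assms(2) obtain x where "x \<in> B" "x \<inter> a = {}"
    unfolding decides_def by blast
  from False assms(3) obtain y where "y \<in> B" "y \<inter> b = {}"
    unfolding decides_def by blast
  from directed[OF \<open>x \<in> B\<close> \<open>y \<in> B\<close>] obtain z where "z \<in> B" "z \<subseteq> x \<inter> y" ..
  with \<open>x \<inter> a = {}\<close> \<open>y \<inter> b = {}\<close> have "z \<inter> (a \<union> b) = {}" by blast
  with \<open>z \<in> B\<close> show ?thesis unfolding decides_def by blast
qed

lemma decides_Diff:
  assumes directed: "\<And>x y. x \<in> B \<Longrightarrow> y \<in> B \<Longrightarrow> \<exists>z\<in>B. z \<subseteq> x \<inter> y"
    and "decides B a" and "decides B b"
  shows "decides B (a - b)"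
proof (cases "\<exists>x\<in>B. x \<inter> a = {} \<or> x \<subseteq> b")
  case True
  then show ?thesis unfolding decides_def by blast
next
  case False
  with assms(2) obtain x where "x \<in> B" "x \<subseteq> a"
    unfolding decides_def by blast
  from False assms(3) obtain y where "y \<in> B" "y \<inter> b = {}"
    unfolding decides_def by blast
  from directed[OF \<open>x \<in> B\<close> \<open>y \<in> B\<close>] obtain z where "z \<in> B" "z \<subseteq> x \<inter> y" ..
  with \<open>x \<subseteq> a\<close> \<open>y \<inter> b = {}\<close> have "z \<subseteq> a - b" by blast
  with \<open>z \<in> B\<close> show ?thesis unfolding decides_def by blast
qed

lemma is_filter_in_upclose:
  assumes A: "ring_of_sets X A" and "B \<noteq> {}" "B \<subseteq> A" "{} \<notin> B"
    and directed: "\<And>x y. x \<in> B \<Longrightarrow> y \<in> B \<Longrightarrow> \<exists>z\<in>B. z \<subseteq> x \<inter> y"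
  shows "is_filter_in A (upclose A B)"
  unfolding is_filter_in_def
proof (intro conjI ballI impI)
  show "upclose A B \<noteq> {}" "upclose A B \<subseteq> A" "{} \<notin> upclose A B"
    using assms(2-4) unfolding upclose_def by auto
next
  fix E E' assume "E \<in> upclose A B" "E' \<in> upclose A B"
  then obtain x y where "x \<in> B" "y \<in> B" "x \<subseteq> E" "y \<subseteq> E'" "E \<in> A" "E' \<in> A"
    unfolding upclose_def by blast
  moreover obtain z where "z \<in> B" "z \<subseteq> x \<inter> y"
    using directed[OF \<open>x \<in> B\<close> \<open>y \<in> B\<close>] ..
  moreover have "E \<inter> E' \<in> A"
    using A \<open>E \<in> A\<close> \<open>E' \<in> A\<close> by (meson ring_of_sets.axioms(1) semiring_of_sets.Int)
  ultimately show "E \<inter> E' \<in> upclose A B"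
    unfolding upclose_def by blast
next
  fix E E' assume "E \<in> upclose A B" "E' \<in> A" "E \<subseteq> E'"
  then show "E' \<in> upclose A B"
    unfolding upclose_def by blast
qed

lemma is_ultrafilter_baseI:
  assumes A: "ring_of_sets X A" and "B \<noteq> {}" "B \<subseteq> A" "{} \<notin> B"
    and directed: "\<And>x y. x \<in> B \<Longrightarrow> y \<in> B \<Longrightarrow> \<exists>z\<in>B. z \<subseteq> x \<inter> y"
    and decisive: "\<And>Q. Q \<in> A \<Longrightarrow> decides B Q"
  shows "is_ultrafilter_base A B"
proof -
  have "\<exists>P\<in>upclose A B. Q \<inter> P = {}" if "Q \<in> A" "Q \<notin> upclose A B" for Q
  proof -
    have "\<not> (\<exists>b\<in>B. b \<subseteq> Q)"
      using that unfolding upclose_def by blast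
    then obtain b where "b \<in> B" "b \<inter> Q = {}"
      using decisive[OF \<open>Q \<in> A\<close>] unfolding decides_def by blast
    moreover have "b \<in> upclose A B"
      using \<open>b \<in> B\<close> \<open>B \<subseteq> A\<close> unfolding upclose_def by blast
    ultimately show ?thesis by blast
  qed
  with is_filter_in_upclose[OF assms(1-5)] have "is_ultrafilter_in A (upclose A B)"
    by (rule is_ultrafilter_inI)
  then show ?thesis
    unfolding is_ultrafilter_base_def using assms(2-4) directed by blast
qed

text \<open>For \<open>D = \<D>\<^sup>(\<^sup>0\<^sup>)\<^sub>v\<close> these are \<open>v\<Lambda>\<^sup>*\<close> and \<open>C \<mapsto> \<U>\<^sup>0\<^sub>C\<close>.\<close>

definition tight_filters :: "'b set set \<Rightarrow> 'b set set set" where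
  "tight_filters D = {C. is_filter_in D C \<and> (\<forall>F. finite F \<and> F \<subseteq> D \<and> F \<inter> C = {} \<longrightarrow> \<not> covers F C)}"

definition tight_base :: "'b set set \<Rightarrow> 'b set set \<Rightarrow> 'b set set" where
  "tight_base D C = {E - \<Union>F | E F. E \<in> C \<and> finite F \<and> F \<subseteq> D \<and> \<not> covers F C}"

lemma tight_filter_is_filter: "C \<in> tight_filters D \<Longrightarrow> is_filter_in D C"
  unfolding tight_filters_def by blast

lemma tight_filter_covers_iff:
  assumes "C \<in> tight_filters D" "finite F" "F \<subseteq> D"
  shows "covers F C \<longleftrightarrow> F \<inter> C \<noteq> {}"
  using assms unfolding tight_filters_def covers_def by blast

lemma tight_baseI:
  assumes "C \<in> tight_filters D" "E \<in> C" "finite F" "F \<subseteq> D" "F \<inter> C = {}"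
  shows "E - \<Union>F \<in> tight_base D C"
proof -
  have "\<not> covers F C"
    using tight_filter_covers_iff[OF assms(1,3,4)] assms(5) by blast
  then show ?thesis
    unfolding tight_base_def using assms(2-4) by blast
qed

lemma tight_baseE:
  assumes "C \<in> tight_filters D" "x \<in> tight_base D C"
  obtains E F where "x = E - \<Union>F" "E \<in> C" "finite F" "F \<subseteq> D" "F \<inter> C = {}"
proof -
  obtain E F where "x = E - \<Union>F" "E \<in> C" "finite F" "F \<subseteq> D" "\<not> covers F C"
    using assms(2) unfolding tight_base_def by blast
  with tight_filter_covers_iff[OF assms(1)] show ?thesis
    using that by blast
qed

lemma tight_base_directed:
  assumes C: "C \<in> tight_filters D" and "x \<in> tight_base D C" "y \<in> tight_base D C"
  shows "\<exists>z\<in>tight_base D C. z \<subseteq> x \<inter> y"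
proof -
  obtain E F where x: "x = E - \<Union>F" "E \<in> C" "finite F" "F \<subseteq> D" "F \<inter> C = {}"
    using tight_baseE[OF C \<open>x \<in> tight_base D C\<close>] .
  obtain E' F' where y: "y = E' - \<Union>F'" "E' \<in> C" "finite F'" "F' \<subseteq> D" "F' \<inter> C = {}"
    using tight_baseE[OF C \<open>y \<in> tight_base D C\<close>] .
  have "E \<inter> E' \<in> C"
    using is_filter_inD(4)[OF tight_filter_is_filter[OF C]] x(2) y(2) .
  then have "E \<inter> E' - \<Union>(F \<union> F') \<in> tight_base D C"
    using x y by (intro tight_baseI[OF C]) auto
  moreover have "E \<inter> E' - \<Union>(F \<union> F') \<subseteq> x \<inter> y"
    using x(1) y(1) by blast
  ultimately show ?thesis by blast
qed

locale meet_closed_family =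
  fixes X :: "'b set" and D :: "'b set set"
  assumes family_subset: "D \<subseteq> Pow X"
    and Int_closed: "\<And>E E'. E \<in> D \<Longrightarrow> E' \<in> D \<Longrightarrow> E \<inter> E' \<noteq> {} \<Longrightarrow> E \<inter> E' \<in> D"
begin

abbreviation \<A> :: "'b set set" where
  "\<A> \<equiv> ring_of_sets X hull D"

lemma ring_of_sets_ring: "ring_of_sets X \<A>"
  using family_subset by (rule ring_of_sets_hull)

lemma family_subset_ring: "D \<subseteq> \<A>"
  by (rule hull_subset)

lemma ring_finite_cover:
  assumes "Q \<in> \<A>"
  shows "\<exists>F. finite F \<and> F \<subseteq> D \<and> Q \<subseteq> \<Union>F"
  using assms family_subset
proof (rule ring_of_sets_hull_induct)
  fix a b
  assume "\<exists>F. finite F \<and> F \<subseteq> D \<and> a \<subseteq> \<Union>F" "\<exists>F. finite F \<and> F \<subseteq> D \<and> b \<subseteq> \<Union>F"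
  then obtain F F' where "finite F" "F \<subseteq> D" "a \<subseteq> \<Union>F" "finite F'" "F' \<subseteq> D" "b \<subseteq> \<Union>F'"
    by blast
  then show "\<exists>F. finite F \<and> F \<subseteq> D \<and> a \<union> b \<subseteq> \<Union>F"
    by (intro exI[of _ "F \<union> F'"]) auto
next
  fix a b
  assume "\<exists>F. finite F \<and> F \<subseteq> D \<and> a \<subseteq> \<Union>F"
  then show "\<exists>F. finite F \<and> F \<subseteq> D \<and> a - b \<subseteq> \<Union>F"
    by blast
next
  fix G assume "G \<in> D"
  then show "\<exists>F. finite F \<and> F \<subseteq> D \<and> G \<subseteq> \<Union>F"
    by (intro exI[of _ "{G}"]) auto
qed blast

lemma tight_base_subset_ring:
  assumes C: "C \<in> tight_filters D"
  shows "tight_base D C \<subseteq> \<A>"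
proof
  fix x assume "x \<in> tight_base D C"
  then obtain E F where x: "x = E - \<Union>F" "E \<in> C" "finite F" "F \<subseteq> D"
    using tight_baseE[OF C] by metis
  have "E \<in> \<A>"
    using is_filter_inD(2)[OF tight_filter_is_filter[OF C]] x(2) family_subset_ring by blast
  moreover have "\<Union>F \<in> \<A>"
    using x(3,4) family_subset_ring ring_of_sets_ring by (meson ring_of_sets.finite_Union subset_trans)
  ultimately show "x \<in> \<A>"
    using ring_of_sets_ring x(1) by (simp add: ring_of_sets_iff)
qed

lemma tight_base_decides:
  assumes C: "C \<in> tight_filters D" and "Q \<in> \<A>"
  shows "decides (tight_base D C) Q"
  using \<open>Q \<in> \<A>\<close> family_subset
proof (rule ring_of_sets_hull_induct)
  obtain E where "E \<in> C"
    using is_filter_inD(1)[OF tight_filter_is_filter[OF C]] ..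
  have "E - \<Union>{} \<in> tight_base D C"
    using \<open>E \<in> C\<close> by (intro tight_baseI[OF C]) auto
  then show "decides (tight_base D C) {}"
    unfolding decides_def by blast
  fix G assume "G \<in> D"
  show "decides (tight_base D C) G"
  proof (cases "G \<in> C")
    case True
    then have "G - \<Union>{} \<in> tight_base D C"
      by (intro tight_baseI[OF C]) auto
    moreover have "G - \<Union>{} \<subseteq> G" by simp
    ultimately show ?thesis
      unfolding decides_def by blast
  next
    case False
    then have "E - \<Union>{G} \<in> tight_base D C"
      using \<open>E \<in> C\<close> \<open>G \<in> D\<close> by (intro tight_baseI[OF C]) auto
    moreover have "(E - \<Union>{G}) \<inter> G = {}" by blast
    ultimately show ?thesis
      unfolding decides_def by blast
  qed
next
  fix a b assume "decides (tight_base D C) a" "decides (tight_base D C) b"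
  then show "decides (tight_base D C) (a \<union> b)" "decides (tight_base D C) (a - b)"
    using decides_Un decides_Diff tight_base_directed[OF C] by metis+
qed

theorem is_ultrafilter_base_tight_base:
  assumes C: "C \<in> tight_filters D"
  shows "is_ultrafilter_base \<A> (tight_base D C)"
proof (rule is_ultrafilter_baseI[OF ring_of_sets_ring])
  obtain E where "E \<in> C"
    using is_filter_inD(1)[OF tight_filter_is_filter[OF C]] ..
  then have "E - \<Union>{} \<in> tight_base D C"
    by (intro tight_baseI[OF C]) auto
  then show "tight_base D C \<noteq> {}" by blast
  show "{} \<notin> tight_base D C"
    unfolding tight_base_def covers_def by blast
  show "tight_base D C \<subseteq> \<A>"
    using C by (rule tight_base_subset_ring)
  show "\<exists>z\<in>tight_base D C. z \<subseteq> x \<inter> y" if "x \<in> tight_base D C" "y \<in> tight_base D C" for x y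
    using C that by (rule tight_base_directed)
  show "decides (tight_base D C) Q" if "Q \<in> \<A>" for Q
    using C that by (rule tight_base_decides)
qed

lemma upclose_tight_base_Int:
  assumes C: "C \<in> tight_filters D"
  shows "upclose \<A> (tight_base D C) \<inter> D = C"
proof
  show "C \<subseteq> upclose \<A> (tight_base D C) \<inter> D"
  proof
    fix G assume "G \<in> C"
    then have "G - \<Union>{} \<in> tight_base D C"
      by (intro tight_baseI[OF C]) auto
    moreover have "G \<in> D"
      using is_filter_inD(2)[OF tight_filter_is_filter[OF C]] \<open>G \<in> C\<close> by blast
    ultimately show "G \<in> upclose \<A> (tight_base D C) \<inter> D"
      using family_subset_ring unfolding upclose_def by blast
  qed
  show "upclose \<A> (tight_base D C) \<inter> D \<subseteq> C"
  proof
    fix G assume G: "G \<in> upclose \<A> (tight_base D C) \<inter> D"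
    then obtain x where "x \<in> tight_base D C" "x \<subseteq> G"
      unfolding upclose_def by blast
    then obtain E F where "E - \<Union>F \<subseteq> G" "E \<in> C" "finite F" "F \<subseteq> D" "F \<inter> C = {}"
      using tight_baseE[OF C] by metis
    moreover have "covers (insert G F) C"
      using \<open>E - \<Union>F \<subseteq> G\<close> \<open>E \<in> C\<close> unfolding covers_def by blast
    ultimately show "G \<in> C"
      using G tight_filter_covers_iff[OF C, of "insert G F"] by blast
  qed
qed

lemma ultrafilter_meets_family:
  assumes U: "is_ultrafilter_in \<A> U" and "finite F" "F \<subseteq> D" "E \<in> U" "E \<subseteq> \<Union>F"
  shows "F \<inter> U \<noteq> {}"
proof -
  have "F \<subseteq> \<A>"
    using \<open>F \<subseteq> D\<close> family_subset_ring by (rule order_trans)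
  then show ?thesis
    using ultrafilter_in_prime[OF ring_of_sets_ring U \<open>finite F\<close>] assms(4,5) by blast
qed

lemma is_filter_in_ultrafilter_Int:
  assumes U: "is_ultrafilter_in \<A> U"
  shows "is_filter_in D (U \<inter> D)"
proof -
  note U_props = is_filter_inD[OF is_ultrafilter_in_filter[OF U]]
  obtain P where "P \<in> U"
    using U_props(1) ..
  then have "P \<in> \<A>"
    using U_props(2) by blast
  then have "\<exists>F. finite F \<and> F \<subseteq> D \<and> P \<subseteq> \<Union>F"
    by (rule ring_finite_cover)
  then obtain F where F: "finite F" "F \<subseteq> D" "P \<subseteq> \<Union>F"
    by blast
  then have "F \<inter> U \<noteq> {}"
    using ultrafilter_meets_family[OF U] \<open>P \<in> U\<close> by blast
  then have nonempty: "U \<inter> D \<noteq> {}"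
    using F(2) by blast
  show ?thesis
    unfolding is_filter_in_def
  proof (intro conjI ballI impI)
    show "U \<inter> D \<noteq> {}" "U \<inter> D \<subseteq> D" "{} \<notin> U \<inter> D"
      using nonempty U_props(3) by blast+
  next
    fix E E' assume E: "E \<in> U \<inter> D" "E' \<in> U \<inter> D"
    then have "E \<inter> E' \<in> U"
      using U_props(4) by blast
    moreover from this have "E \<inter> E' \<noteq> {}"
      using U_props(3) by metis
    ultimately show "E \<inter> E' \<in> U \<inter> D"
      using E Int_closed by blast
  next
    fix E E' assume "E \<in> U \<inter> D" "E' \<in> D" "E \<subseteq> E'"
    then show "E' \<in> U \<inter> D"
      using U_props(5) family_subset_ring by blast
  qed
qed

lemma tight_filter_Int_ultrafilter:
  assumes U: "is_ultrafilter_in \<A> U"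
  shows "U \<inter> D \<in> tight_filters D"
proof -
  have "\<forall>F. finite F \<and> F \<subseteq> D \<and> F \<inter> (U \<inter> D) = {} \<longrightarrow> \<not> covers F (U \<inter> D)"
  proof (intro allI impI notI)
    fix F assume F: "finite F \<and> F \<subseteq> D \<and> F \<inter> (U \<inter> D) = {}" and "covers F (U \<inter> D)"
    then obtain E where "E \<in> U" "E \<subseteq> \<Union>F"
      unfolding covers_def by blast
    then have "F \<inter> U \<noteq> {}"
      using ultrafilter_meets_family[OF U] F by blast
    with F show False by blast
  qed
  with is_filter_in_ultrafilter_Int[OF U] show ?thesis
    unfolding tight_filters_def by (intro CollectI conjI)
qed

lemma upclose_tight_base_ultrafilter:
  assumes U: "is_ultrafilter_in \<A> U"
  shows "upclose \<A> (tight_base D (U \<inter> D)) = U"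
proof -
  have filter: "is_filter_in \<A> U"
    using U by (rule is_ultrafilter_in_filter)
  have C: "U \<inter> D \<in> tight_filters D"
    using U by (rule tight_filter_Int_ultrafilter)
  have "x \<in> U" if x: "x \<in> tight_base D (U \<inter> D)" for x
  proof (rule ccontr)
    assume "x \<notin> U"
    obtain E F where "x = E - \<Union>F" "E \<in> U \<inter> D" "finite F" "F \<subseteq> D" "F \<inter> (U \<inter> D) = {}"
      using tight_baseE[OF C x] .
    moreover have "x \<in> \<A>"
      using x tight_base_subset_ring[OF C] by blast
    ultimately have "insert x F \<inter> U \<noteq> {}"
      using family_subset_ring by (intro ultrafilter_in_prime[OF ring_of_sets_ring U, of _ E]) auto
    then show False
      using \<open>x \<notin> U\<close> \<open>F \<subseteq> D\<close> \<open>F \<inter> (U \<inter> D) = {}\<close> by blast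
  qed
  then have "upclose \<A> (tight_base D (U \<inter> D)) \<subseteq> U"
    unfolding upclose_def using is_filter_inD(5)[OF filter] by blast
  moreover have "is_ultrafilter_in \<A> (upclose \<A> (tight_base D (U \<inter> D)))"
    using is_ultrafilter_base_tight_base[OF C] unfolding is_ultrafilter_base_def by blast
  ultimately show ?thesis
    using is_ultrafilter_in_maximal filter by blast
qed

theorem bij_betw_tight_filters_ultrafilters:
  "bij_betw (\<lambda>C. upclose \<A> (tight_base D C)) (tight_filters D) {U. is_ultrafilter_in \<A> U}"
proof (rule bij_betw_byWitness[where f' = "\<lambda>U. U \<inter> D"])
  show "\<forall>C\<in>tight_filters D. upclose \<A> (tight_base D C) \<inter> D = C"
    using upclose_tight_base_Int by blast
  show "\<forall>U\<in>{U. is_ultrafilter_in \<A> U}. upclose \<A> (tight_base D (U \<inter> D)) = U"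
    using upclose_tight_base_ultrafilter by blast
  show "(\<lambda>C. upclose \<A> (tight_base D C)) ` tight_filters D \<subseteq> {U. is_ultrafilter_in \<A> U}"
    using is_ultrafilter_base_tight_base unfolding is_ultrafilter_base_def by blast
  show "(\<lambda>U. U \<inter> D) ` {U. is_ultrafilter_in \<A> U} \<subseteq> tight_filters D"
    using tight_filter_Int_ultrafilter by blast
qed

end

definition zz_reverse :: "('a \<times> 'a) list \<Rightarrow> ('a \<times> 'a) list" where
  "zz_reverse z = rev (map prod.swap z)"

definition zz_morphisms :: "'a smallcat \<Rightarrow> ('a \<times> 'a) list \<Rightarrow> bool" where
  "zz_morphisms L z \<longleftrightarrow> (\<forall>p\<in>set z. fst p \<in> Mor L \<and> snd p \<in> Mor L \<and> rng L (fst p) = rng L (snd p))"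

definition zz_composable :: "'a smallcat \<Rightarrow> ('a \<times> 'a) list \<Rightarrow> bool" where
  "zz_composable L z \<longleftrightarrow> successively (\<lambda>p q. src L (fst q) = src L (snd p)) z"

lemma zigzag_iff: "zigzag L z \<longleftrightarrow> z \<noteq> [] \<and> zz_morphisms L z \<and> zz_composable L z"
  unfolding zigzag_def zz_morphisms_def zz_composable_def successively_conv_nth
  by (simp add: all_set_conv_all_nth)

lemma zz_morphisms_append [simp]: "zz_morphisms L (z @ w) \<longleftrightarrow> zz_morphisms L z \<and> zz_morphisms L w"
  unfolding zz_morphisms_def by auto

lemma zz_morphisms_reverse [simp]: "zz_morphisms L (zz_reverse z) \<longleftrightarrow> zz_morphisms L z"
  unfolding zz_morphisms_def zz_reverse_def by auto

lemma zz_composable_reverse [simp]: "zz_composable L (zz_reverse z) \<longleftrightarrow> zz_composable L z"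
proof -
  have swap: "(\<lambda>p q. src L (snd p) = src L (fst q)) = (\<lambda>p q. src L (fst q) = src L (snd p))"
    by (intro ext) (rule eq_commute)
  show ?thesis
    unfolding zz_composable_def zz_reverse_def successively_rev successively_map prod.swap_def
      fst_conv snd_conv swap ..
qed

lemma zz_reverse_hd_last:
  assumes "z \<noteq> []"
  shows "hd (zz_reverse z) = prod.swap (last z)" and "last (zz_reverse z) = prod.swap (hd z)"
  using assms unfolding zz_reverse_def by (simp_all add: hd_rev last_rev hd_map last_map)

lemma zzmap_append: "zzmap L (z @ w) g = Option.bind (zzmap L w g) (zzmap L z)"
proof (induction z)
  case (Cons p z)
  then show ?case by (cases p) (simp add: Option.bind_assoc)
qed simp

lemma zzdom_subset_vLam:
  assumes "z \<noteq> []"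
  shows "zzdom L z \<subseteq> vLam L (zsrc L z)"
proof
  fix g assume g: "g \<in> zzdom L z"
  obtain y a b where z: "z = y @ [(a, b)]"
    using assms by (metis rev_exhaust surj_pair)
  have "zzmap L z g = Option.bind (Option.bind (tau L b g) (sigma L a)) (zzmap L y)"
    unfolding z by (simp add: zzmap_append)
  with g have "tau L b g \<noteq> None"
    unfolding zzdom_def by (cases "tau L b g") auto
  with g show "g \<in> vLam L (zsrc L z)"
    unfolding tau_def zzdom_def vLam_def zsrc_def z by (auto split: if_splits)
qed

lemma D0_subset: "D0 L v \<subseteq> Pow (vLam L v)"
  unfolding D0_def zigzag_def using zzdom_subset_vLam by blast

context
  fixes L :: "'a smallcat"
  assumes left_cancellative: "LCSC L"
begin

lemma left_cancel:
  assumes "a \<in> Mor L" "b \<in> Mor L" "c \<in> Mor L" "rng L b = src L a" "rng L c = src L a"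
    and "cmp L a b = cmp L a c"
  shows "b = c"
  using left_cancellative assms unfolding LCSC_def by metis

lemma sigma_cmp:
  assumes "a \<in> Mor L" "e \<in> Mor L" "rng L e = src L a"
  shows "sigma L a (cmp L a e) = Some e"
proof -
  have "(THE e'. e' \<in> Mor L \<and> rng L e' = src L a \<and> cmp L a e' = cmp L a e) = e"
    using assms left_cancel[OF assms(1) _ assms(2) _ assms(3)] by (intro the_equality) auto
  then show ?thesis
    unfolding sigma_def using assms by auto
qed

lemma sigma_eq_Some:
  assumes "a \<in> Mor L"
  shows "sigma L a d = Some e \<longleftrightarrow> e \<in> Mor L \<and> rng L e = src L a \<and> cmp L a e = d"
proof
  assume sigma: "sigma L a d = Some e"
  then obtain e' where "e' \<in> Mor L" "rng L e' = src L a" "cmp L a e' = d"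
    unfolding sigma_def by (auto split: if_splits)
  with sigma show "e \<in> Mor L \<and> rng L e = src L a \<and> cmp L a e = d"
    using sigma_cmp[OF assms] by auto
qed (use sigma_cmp[OF assms] in auto)

lemma zzmap_Cons_eq_Some:
  assumes "a \<in> Mor L"
  shows "zzmap L ((a, b) # z) g = Some h \<longleftrightarrow>
    (\<exists>d. zzmap L z g = Some d \<and> d \<in> Mor L \<and> rng L d = src L b
       \<and> h \<in> Mor L \<and> rng L h = src L a \<and> cmp L a h = cmp L b d)"
  using sigma_eq_Some[OF assms] by (auto simp: tau_def bind_eq_Some_conv)

lemma zzmap_reverse:
  assumes "zz_morphisms L z" "zzmap L z g = Some h"
  shows "zzmap L (zz_reverse z) h = Some g"
  using assms
proof (induction z arbitrary: h)
  case Nil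
  then show ?case by (simp add: zz_reverse_def)
next
  case (Cons p z)
  obtain a b where p: "p = (a, b)" by fastforce
  with Cons.prems have ab: "a \<in> Mor L" "b \<in> Mor L" "zz_morphisms L z"
    unfolding zz_morphisms_def by auto
  then obtain d where d: "zzmap L z g = Some d" "d \<in> Mor L" "rng L d = src L b"
    and h: "h \<in> Mor L" "rng L h = src L a" "cmp L a h = cmp L b d"
    using Cons.prems(2) zzmap_Cons_eq_Some unfolding p by blast
  have "zzmap L [(b, a)] h = Some d"
    unfolding zzmap_Cons_eq_Some[OF ab(2)] using d h by simp
  moreover have "zz_reverse (p # z) = zz_reverse z @ [(b, a)]"
    unfolding zz_reverse_def p by simp
  ultimately show ?case
    using Cons.IH[OF ab(3) d(1)] by (simp add: zzmap_append)
qed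

lemma zzmap_reverse_append:
  assumes "zz_morphisms L z"
  shows "zzmap L (zz_reverse z @ z) g = map_option (\<lambda>_. g) (zzmap L z g)"
  using zzmap_reverse[OF assms] by (cases "zzmap L z g") (simp_all add: zzmap_append)

text \<open>The zigzag \<open>zz_reverse z @ z\<close> acts as the identity on \<open>A(z)\<close>, so \<open>A(z) \<inter> A(z')\<close> is the
  domain of \<open>zz_reverse z @ z @ zz_reverse z' @ z'\<close>.\<close>

lemma D0_Int:
  assumes "E \<in> D0 L v" "E' \<in> D0 L v" "E \<inter> E' \<noteq> {}"
  shows "E \<inter> E' \<in> D0 L v"
proof -
  obtain z z' where z: "E = zzdom L z" "z \<noteq> []" "zz_morphisms L z" "zz_composable L z" "zsrc L z = v"
    and z': "E' = zzdom L z'" "z' \<noteq> []" "zz_morphisms L z'" "zz_composable L z'" "zsrc L z' = v"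
    using assms(1,2) unfolding D0_def zigzag_iff by blast
  define w where "w = zz_reverse z @ z @ zz_reverse z' @ z'"
  have "zz_morphisms L w"
    using z(3) z'(3) unfolding w_def by simp
  moreover have "zz_composable L w"
    using z z' zz_composable_reverse[of L z] zz_composable_reverse[of L z'] zz_reverse_hd_last[OF z(2)]
      zz_reverse_hd_last[OF z'(2)]
    unfolding w_def zz_composable_def zsrc_def
    by (simp add: successively_append_iff zz_reverse_def prod.swap_def)
  ultimately have "zigzag L w"
    using z(2) unfolding zigzag_iff w_def by simp
  moreover have "zsrc L w = v"
    using z'(2,5) unfolding w_def zsrc_def by simp
  moreover have "zzdom L w = E \<inter> E'"
  proof -
    have "zzmap L w g = Option.bind (zzmap L z' g) (\<lambda>_. map_option (\<lambda>_. g) (zzmap L z g))" for g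
      unfolding w_def
      using zzmap_append[of L "zz_reverse z @ z" "zz_reverse z' @ z'"]
      by (simp add: zzmap_reverse_append z(3) z'(3) bind_map_option comp_def)
    then show ?thesis
      unfolding z(1) z'(1) zzdom_def by (auto split: Option.bind_splits)
  qed
  ultimately show ?thesis
    using assms(3) unfolding D0_def by blast
qed

end

theorem mainTheorem4:
  fixes L :: "'a smallcat" and v :: 'a
  assumes "LCSC L" and "v \<in> objects L"
  shows "(\<forall>C\<in>vLamStar L v. is_ultrafilter_base (Av L v) (U0 L v C))
    \<and> bij_betw (\<lambda>C. upclose (Av L v) (U0 L v C)) (vLamStar L v) {U. is_ultrafilter_in (Av L v) U}
    \<and> (\<forall>C\<in>vLamStar L v. upclose (Av L v) (U0 L v C) \<inter> D0 L v = C)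
    \<and> (\<forall>U. is_ultrafilter_in (Av L v) U \<longrightarrow>
          U \<inter> D0 L v \<in> vLamStar L v \<and> upclose (Av L v) (U0 L v (U \<inter> D0 L v)) = U)"
proof -
  interpret meet_closed_family "vLam L v" "D0 L v"
    using D0_subset D0_Int[OF assms(1)] by unfold_locales
  have "Av L v = ring_of_sets (vLam L v) hull D0 L v"
    unfolding Av_def hull_def ..
  moreover have "vLamStar L v = tight_filters (D0 L v)"
    unfolding vLamStar_def tight_filters_def ..
  moreover have "U0 L v = tight_base (D0 L v)"
    by (intro ext) (simp only: U0_def tight_base_def)
  ultimately show ?thesis
    using is_ultrafilter_base_tight_base bij_betw_tight_filters_ultrafilters upclose_tight_base_Int
      tight_filter_Int_ultrafilter upclose_tight_base_ultrafilter
    by simp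
qed

end
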